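(* Let $H$ be a bialgebra that is projective as a $k$-module, $A$ a left $H$-comodule algebra, and consider the Doi-Hopf datum $(H,A,H)$ ($H$ acting on itself by right multiplication). If $\gamma:H\to\mathrm{Hom}(H,A)$ is an $A$-integral, then $\varphi_\gamma:H\to A$, $\varphi_\gamma(h)=\gamma(h)(1_H)$, is left $H$-colinear; if moreover $\gamma$ is total, then $\varphi_\gamma(1_H)=1_A$, i.e. $\varphi_\gamma$ is a total integral in the sense of Doi.
   Context: $k$ commutative ring; Sweedler notation $\Delta(h)=\sum h_{(1)}\otimes h_{(2)}$, $\rho_A(a)=\sum a_{<-1>}\otimes a_{<0>}$ (iterated $a_{<-2>}\otimes a_{<-1>}\otimes a_{<0>}$). A left $H$-comodule algebra is an algebra $A$ with a left $H$-coaction that is an algebra map. For the Doi-Hopf datum $(H,A,C)$ with $C=H$ and $c\cdot h=ch$, an $A$-integral is a $k$-linear $\gamma:H\to\mathrm{Hom}(H,A)$ with, for all $a\in A$, $c,d\in H$: (i) $\sum a_{<0>}\gamma(ca_{<-2>})(da_{<-1>})=\gamma(c)(d)\,a$; (ii) $\sum c_{(1)}\otimes\gamma(c_{(2)})(d)=\sum d_{(2)}\gamma(c)(d_{(1)})_{<-1>}\otimes\gamma(c)(d_{(1)})_{<0>}$; it is total if $\sum\gamma(c_{(1)})(c_{(2)})=\varepsilon(c)1_A$. A total integral (Doi) is a left $H$-colinear map $\varphi:H\to A$ with $\varphi(1_H)=1_A$. *)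

theory Defs
  imports Complex_Main "HOL-Library.Function_Algebras"
begin

text \<open>An element of a tensor product M (x) N (resp. M (x) N (x) P) over the commutative
ring 'k is represented by a finite list of simple tensors (Sweedler-style sums).
Two lists represent the same element iff the difference of the associated
elements of the free k-module on M x N (resp. M x N x P) lies in the submodule
spanned by the multilinearity relations, i.e. the usual construction of the
tensor product as a quotient of the free module.\<close>

definition fscale :: "'k::comm_ring_1 \<Rightarrow> ('x \<Rightarrow> 'k) \<Rightarrow> ('x \<Rightarrow> 'k)" where
  "fscale r f = (\<lambda>x. r * f x)"

definition fvec :: "'x list \<Rightarrow> ('x \<Rightarrow> 'k::comm_ring_1)" where
  "fvec xs = (\<lambda>p. of_nat (count_list xs p))"

definition delta :: "'x \<Rightarrow> ('x \<Rightarrow> 'k::comm_ring_1)" where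
  "delta p = (\<lambda>q. if q = p then 1 else 0)"

definition tens2_rels ::
  "('k::comm_ring_1 \<Rightarrow> 'm::ab_group_add \<Rightarrow> 'm) \<Rightarrow> ('k \<Rightarrow> 'n::ab_group_add \<Rightarrow> 'n)
   \<Rightarrow> ('m \<times> 'n \<Rightarrow> 'k) set" where
  "tens2_rels sM sN =
     {delta (m + m', n) - delta (m, n) - delta (m', n) | m m' n. True}
   \<union> {delta (m, n + n') - delta (m, n) - delta (m, n') | m n n'. True}
   \<union> {delta (sM r m, n) - fscale r (delta (m, n)) | r m n. True}
   \<union> {delta (m, sN r n) - fscale r (delta (m, n)) | r m n. True}"

definition tens2_eq ::
  "('k::comm_ring_1 \<Rightarrow> 'm::ab_group_add \<Rightarrow> 'm) \<Rightarrow> ('k \<Rightarrow> 'n::ab_group_add \<Rightarrow> 'n)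
   \<Rightarrow> ('m \<times> 'n) list \<Rightarrow> ('m \<times> 'n) list \<Rightarrow> bool" where
  "tens2_eq sM sN xs ys \<longleftrightarrow> fvec xs - fvec ys \<in> module.span fscale (tens2_rels sM sN)"

definition tens3_rels ::
  "('k::comm_ring_1 \<Rightarrow> 'm::ab_group_add \<Rightarrow> 'm) \<Rightarrow> ('k \<Rightarrow> 'n::ab_group_add \<Rightarrow> 'n)
   \<Rightarrow> ('k \<Rightarrow> 'p::ab_group_add \<Rightarrow> 'p) \<Rightarrow> ('m \<times> 'n \<times> 'p \<Rightarrow> 'k) set" where
  "tens3_rels sM sN sP =
     {delta (m + m', n, p) - delta (m, n, p) - delta (m', n, p) | m m' n p. True}
   \<union> {delta (m, n + n', p) - delta (m, n, p) - delta (m, n', p) | m n n' p. True}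
   \<union> {delta (m, n, p + p') - delta (m, n, p) - delta (m, n, p') | m n p p'. True}
   \<union> {delta (sM r m, n, p) - fscale r (delta (m, n, p)) | r m n p. True}
   \<union> {delta (m, sN r n, p) - fscale r (delta (m, n, p)) | r m n p. True}
   \<union> {delta (m, n, sP r p) - fscale r (delta (m, n, p)) | r m n p. True}"

definition tens3_eq ::
  "('k::comm_ring_1 \<Rightarrow> 'm::ab_group_add \<Rightarrow> 'm) \<Rightarrow> ('k \<Rightarrow> 'n::ab_group_add \<Rightarrow> 'n)
   \<Rightarrow> ('k \<Rightarrow> 'p::ab_group_add \<Rightarrow> 'p)
   \<Rightarrow> ('m \<times> 'n \<times> 'p) list \<Rightarrow> ('m \<times> 'n \<times> 'p) list \<Rightarrow> bool" where
  "tens3_eq sM sN sP xs ys \<longleftrightarrow> fvec xs - fvec ys \<in> module.span fscale (tens3_rels sM sN sP)"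

text \<open>A k-algebra: a ring (type class ring_1 gives associativity, unit, biadditivity)
which is a k-module such that multiplication is k-bilinear.\<close>

definition k_algebra :: "('k::comm_ring_1 \<Rightarrow> 'a::ring_1 \<Rightarrow> 'a) \<Rightarrow> bool" where
  "k_algebra s \<longleftrightarrow> module s \<and>
     (\<forall>r x y. s r (x * y) = s r x * y \<and> s r (x * y) = x * s r y)"

text \<open>Projective k-module: the canonical surjection from the free module on the
underlying set, k^(M) \<rightarrow> M, splits k-linearly (M is a direct summand of a free module).\<close>

definition projective_module :: "('k::comm_ring_1 \<Rightarrow> 'm::ab_group_add \<Rightarrow> 'm) \<Rightarrow> bool" where
  "projective_module s \<longleftrightarrow> module s \<and>
     (\<exists>f :: 'm \<Rightarrow> 'm \<Rightarrow> 'k. module_hom s fscale f \<and>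
        (\<forall>m. finite {x. f m x \<noteq> 0} \<and> (\<Sum>x\<in>{x. f m x \<noteq> 0}. s (f m x) x) = m))"

text \<open>Bialgebra (H, mult, 1, Delta, eps) over k; Delta h is a list representing
sum h_(1) (x) h_(2).\<close>

definition bialgebra ::
  "('k::comm_ring_1 \<Rightarrow> 'h::ring_1 \<Rightarrow> 'h) \<Rightarrow> ('h \<Rightarrow> ('h \<times> 'h) list) \<Rightarrow> ('h \<Rightarrow> 'k) \<Rightarrow> bool" where
  "bialgebra sH \<Delta> \<epsilon> \<longleftrightarrow> k_algebra sH \<and>
     \<comment> \<open>Delta is k-linear\<close>
     (\<forall>x y. tens2_eq sH sH (\<Delta> (x + y)) (\<Delta> x @ \<Delta> y)) \<and>
     (\<forall>r x. tens2_eq sH sH (\<Delta> (sH r x)) (map (\<lambda>(a, b). (sH r a, b)) (\<Delta> x))) \<and>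
     \<comment> \<open>coassociativity\<close>
     (\<forall>x. tens3_eq sH sH sH
        (concat (map (\<lambda>(a, b). map (\<lambda>(b1, b2). (a, b1, b2)) (\<Delta> b)) (\<Delta> x)))
        (concat (map (\<lambda>(a, b). map (\<lambda>(a1, a2). (a1, a2, b)) (\<Delta> a)) (\<Delta> x)))) \<and>
     \<comment> \<open>eps is k-linear and a counit\<close>
     module_hom sH (*) \<epsilon> \<and>
     (\<forall>x. (\<Sum>(a, b)\<leftarrow>\<Delta> x. sH (\<epsilon> a) b) = x) \<and>
     (\<forall>x. (\<Sum>(a, b)\<leftarrow>\<Delta> x. sH (\<epsilon> b) a) = x) \<and>
     \<comment> \<open>Delta and eps are algebra maps\<close>
     (\<forall>x y. tens2_eq sH sH (\<Delta> (x * y))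
        (concat (map (\<lambda>(x1, x2). map (\<lambda>(y1, y2). (x1 * y1, x2 * y2)) (\<Delta> y)) (\<Delta> x)))) \<and>
     tens2_eq sH sH (\<Delta> 1) [(1, 1)] \<and>
     (\<forall>x y. \<epsilon> (x * y) = \<epsilon> x * \<epsilon> y) \<and> \<epsilon> 1 = 1"

text \<open>Left H-comodule algebra A with coaction rho a = sum a_<-1> (x) a_<0>.\<close>

definition left_comodule_algebra ::
  "('k::comm_ring_1 \<Rightarrow> 'h::ring_1 \<Rightarrow> 'h) \<Rightarrow> ('h \<Rightarrow> ('h \<times> 'h) list) \<Rightarrow> ('h \<Rightarrow> 'k)
   \<Rightarrow> ('k \<Rightarrow> 'a::ring_1 \<Rightarrow> 'a) \<Rightarrow> ('a \<Rightarrow> ('h \<times> 'a) list) \<Rightarrow> bool" where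
  "left_comodule_algebra sH \<Delta> \<epsilon> sA \<rho> \<longleftrightarrow> k_algebra sA \<and>
     \<comment> \<open>rho is k-linear\<close>
     (\<forall>x y. tens2_eq sH sA (\<rho> (x + y)) (\<rho> x @ \<rho> y)) \<and>
     (\<forall>r x. tens2_eq sH sA (\<rho> (sA r x)) (map (\<lambda>(h, a). (sH r h, a)) (\<rho> x))) \<and>
     \<comment> \<open>coassociativity: (Delta (x) id) rho = (id (x) rho) rho\<close>
     (\<forall>x. tens3_eq sH sH sA
        (concat (map (\<lambda>(h, a). map (\<lambda>(h1, h2). (h1, h2, a)) (\<Delta> h)) (\<rho> x)))
        (concat (map (\<lambda>(h, a). map (\<lambda>(g, b). (h, g, b)) (\<rho> a)) (\<rho> x)))) \<and>
     \<comment> \<open>counit\<close>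
     (\<forall>x. (\<Sum>(h, a)\<leftarrow>\<rho> x. sA (\<epsilon> h) a) = x) \<and>
     \<comment> \<open>rho is an algebra map\<close>
     (\<forall>x y. tens2_eq sH sA (\<rho> (x * y))
        (concat (map (\<lambda>(h, a). map (\<lambda>(g, b). (h * g, a * b)) (\<rho> y)) (\<rho> x)))) \<and>
     tens2_eq sH sA (\<rho> 1) [(1, 1)]"

text \<open>gamma : H \<rightarrow> Hom(H, A), written curried: gamma c d = gamma(c)(d).
k-linearity of gamma into Hom_k(H,A) = k-bilinearity of the curried map.\<close>

definition A_integral ::
  "('k::comm_ring_1 \<Rightarrow> 'h::ring_1 \<Rightarrow> 'h) \<Rightarrow> ('h \<Rightarrow> ('h \<times> 'h) list)
   \<Rightarrow> ('k \<Rightarrow> 'a::ring_1 \<Rightarrow> 'a) \<Rightarrow> ('a \<Rightarrow> ('h \<times> 'a) list) \<Rightarrow> ('h \<Rightarrow> 'h \<Rightarrow> 'a) \<Rightarrow> bool" where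
  "A_integral sH \<Delta> sA \<rho> \<gamma> \<longleftrightarrow>
     (\<forall>c. module_hom sH sA (\<gamma> c)) \<and> (\<forall>d. module_hom sH sA (\<lambda>c. \<gamma> c d)) \<and>
     \<comment> \<open>(i): sum a_<0> gamma(c a_<-2>)(d a_<-1>) = gamma(c)(d) a\<close>
     (\<forall>a c d. (\<Sum>(h, a0)\<leftarrow>\<rho> a. \<Sum>(h1, h2)\<leftarrow>\<Delta> h. a0 * \<gamma> (c * h1) (d * h2)) = \<gamma> c d * a) \<and>
     \<comment> \<open>(ii): sum c_(1) (x) gamma(c_(2))(d) = sum d_(2) gamma(c)(d_(1))_<-1> (x) gamma(c)(d_(1))_<0>\<close>
     (\<forall>c d. tens2_eq sH sA
        (map (\<lambda>(c1, c2). (c1, \<gamma> c2 d)) (\<Delta> c))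
        (concat (map (\<lambda>(d1, d2). map (\<lambda>(h, a). (d2 * h, a)) (\<rho> (\<gamma> c d1))) (\<Delta> d))))"

definition total_A_integral ::
  "('k::comm_ring_1 \<Rightarrow> 'h::ring_1 \<Rightarrow> 'h) \<Rightarrow> ('h \<Rightarrow> ('h \<times> 'h) list) \<Rightarrow> ('h \<Rightarrow> 'k)
   \<Rightarrow> ('k \<Rightarrow> 'a::ring_1 \<Rightarrow> 'a) \<Rightarrow> ('a \<Rightarrow> ('h \<times> 'a) list) \<Rightarrow> ('h \<Rightarrow> 'h \<Rightarrow> 'a) \<Rightarrow> bool" where
  "total_A_integral sH \<Delta> \<epsilon> sA \<rho> \<gamma> \<longleftrightarrow> A_integral sH \<Delta> sA \<rho> \<gamma> \<and>
     (\<forall>c. (\<Sum>(c1, c2)\<leftarrow>\<Delta> c. \<gamma> c1 c2) = sA (\<epsilon> c) 1)"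

definition left_colinear ::
  "('k::comm_ring_1 \<Rightarrow> 'h::ring_1 \<Rightarrow> 'h) \<Rightarrow> ('h \<Rightarrow> ('h \<times> 'h) list)
   \<Rightarrow> ('k \<Rightarrow> 'a::ring_1 \<Rightarrow> 'a) \<Rightarrow> ('a \<Rightarrow> ('h \<times> 'a) list) \<Rightarrow> ('h \<Rightarrow> 'a) \<Rightarrow> bool" where
  "left_colinear sH \<Delta> sA \<rho> \<phi> \<longleftrightarrow> module_hom sH sA \<phi> \<and>
     (\<forall>h. tens2_eq sH sA (\<rho> (\<phi> h)) (map (\<lambda>(h1, h2). (h1, \<phi> h2)) (\<Delta> h)))"

definition doi_total_integral ::
  "('k::comm_ring_1 \<Rightarrow> 'h::ring_1 \<Rightarrow> 'h) \<Rightarrow> ('h \<Rightarrow> ('h \<times> 'h) list)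
   \<Rightarrow> ('k \<Rightarrow> 'a::ring_1 \<Rightarrow> 'a) \<Rightarrow> ('a \<Rightarrow> ('h \<times> 'a) list) \<Rightarrow> ('h \<Rightarrow> 'a) \<Rightarrow> bool" where
  "doi_total_integral sH \<Delta> sA \<rho> \<phi> \<longleftrightarrow> left_colinear sH \<Delta> sA \<rho> \<phi> \<and> \<phi> 1 = 1"

end

theory Submission
  imports Defs
begin

text \<open>
  Axiom (ii) of an A-integral at d = 1 says that sum c_(1) (x) gamma(c_(2))(1) equals
  sum 1_(2) gamma(c)(1_(1))_<-1> (x) gamma(c)(1_(1))_<0>. Since d1 (x) d2 |-> d2 rho(gamma(c)(d1))
  is well defined on H (x) H and Delta(1) = 1 (x) 1, the right-hand side is rho(gamma(c)(1)):
  this is the colinearity of phi_gamma. Totality at c = 1 gives gamma(1)(1) = epsilon(1) 1 = 1.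

  Tensors are lists of simple tensors modulo the multilinearity relations, so a map is well
  defined on them as soon as it is bilinear; this is seen by extending it linearly to the free
  module, where it kills the span of the relations.
\<close>

definition fsupp :: "('x \<Rightarrow> 'k::zero) \<Rightarrow> 'x set" where
  "fsupp v = {p. v p \<noteq> 0}"

text \<open>The k-linear extension of \<open>f\<close> to the free module on \<open>'x\<close>; only meaningful for finitely
  supported \<open>v\<close>, since the sum over an infinite support is 0.\<close>

definition lin_ext ::
  "('k::comm_ring_1 \<Rightarrow> 'v::ab_group_add \<Rightarrow> 'v) \<Rightarrow> ('x \<Rightarrow> 'v) \<Rightarrow> ('x \<Rightarrow> 'k) \<Rightarrow> 'v" where
  "lin_ext s f v = (\<Sum>p\<in>fsupp v. s (v p) (f p))"

lemma module_fscale: "module (fscale :: 'k::comm_ring_1 \<Rightarrow> ('x \<Rightarrow> 'k) \<Rightarrow> _)"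
  by unfold_locales (auto simp: fscale_def fun_eq_iff algebra_simps)

lemma finite_fsupp_add [simp]:
  "finite (fsupp v) \<Longrightarrow> finite (fsupp w) \<Longrightarrow> finite (fsupp (v + w :: 'x \<Rightarrow> 'k::comm_ring_1))"
  by (rule finite_subset[of _ "fsupp v \<union> fsupp w"]) (auto simp: fsupp_def)

lemma finite_fsupp_diff [simp]:
  "finite (fsupp v) \<Longrightarrow> finite (fsupp w) \<Longrightarrow> finite (fsupp (v - w :: 'x \<Rightarrow> 'k::comm_ring_1))"
  by (rule finite_subset[of _ "fsupp v \<union> fsupp w"]) (auto simp: fsupp_def)

lemma finite_fsupp_fscale [simp]: "finite (fsupp v) \<Longrightarrow> finite (fsupp (fscale r v))"
  by (rule finite_subset[of _ "fsupp v"]) (auto simp: fsupp_def fscale_def)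

lemma fsupp_zero [simp]: "fsupp 0 = {}"
  by (simp add: fsupp_def)

lemma fsupp_delta [simp]: "fsupp (delta p :: _ \<Rightarrow> 'k::comm_ring_1) = {p}"
  by (auto simp: fsupp_def delta_def)

lemma fvec_Nil [simp]: "fvec [] = 0"
  by (simp add: fvec_def fun_eq_iff)

lemma fvec_Cons [simp]: "fvec (x # xs) = delta x + fvec xs"
  by (simp add: fvec_def delta_def fun_eq_iff)

lemma fvec_append [simp]: "fvec (xs @ ys) = fvec xs + fvec ys"
  by (induction xs) (simp_all add: add.assoc)

lemma fvec_concat: "fvec (concat xss) = sum_list (map fvec xss)"
  by (induction xss) simp_all

lemma finite_fsupp_fvec [simp]: "finite (fsupp (fvec xs :: _ \<Rightarrow> 'k::comm_ring_1))"
proof (rule finite_subset)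
  show "fsupp (fvec xs :: _ \<Rightarrow> 'k) \<subseteq> set xs"
    by (auto simp: fsupp_def fvec_def) (metis count_notin of_nat_0)
qed simp

lemma lin_ext_eq_sum:
  assumes "module s" "finite S" "fsupp v \<subseteq> S"
  shows "lin_ext s f v = (\<Sum>p\<in>S. s (v p) (f p))"
  unfolding lin_ext_def
  by (rule sum.mono_neutral_left) (use assms in \<open>auto simp: fsupp_def module.scale_zero_left\<close>)

lemma lin_ext_add:
  assumes s: "module s" and "finite (fsupp v)" "finite (fsupp w)"
  shows "lin_ext s f (v + w) = lin_ext s f v + lin_ext s f w"
proof -
  let ?S = "fsupp v \<union> fsupp w"
  have "lin_ext s f (v + w) = (\<Sum>p\<in>?S. s (v p) (f p)) + (\<Sum>p\<in>?S. s (w p) (f p))"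
    using assms by (subst lin_ext_eq_sum[of _ ?S])
      (auto simp: fsupp_def module.scale_left_distrib[OF s] sum.distrib)
  then show ?thesis
    using assms by (simp add: lin_ext_eq_sum[of _ ?S])
qed

lemma lin_ext_diff:
  assumes "module s" "finite (fsupp v)" "finite (fsupp w)"
  shows "lin_ext s f (v - w) = lin_ext s f v - lin_ext s f w"
  using lin_ext_add[of s "v - w" w f] assms by (simp add: eq_diff_eq)

lemma lin_ext_fscale:
  assumes s: "module s" and "finite (fsupp v)"
  shows "lin_ext s f (fscale r v) = s r (lin_ext s f v)"
proof -
  have "lin_ext s f (fscale r v) = (\<Sum>p\<in>fsupp v. s (r * v p) (f p))"
    using assms by (subst lin_ext_eq_sum[of _ "fsupp v"]) (auto simp: fsupp_def fscale_def)
  then show ?thesis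
    by (simp add: lin_ext_def module.scale_sum_right[OF s] module.scale_scale[OF s])
qed

lemma lin_ext_delta: "module s \<Longrightarrow> lin_ext s f (delta p) = f p"
  by (simp add: lin_ext_def) (simp add: delta_def module.scale_one)

lemma lin_ext_fvec: "module s \<Longrightarrow> lin_ext s f (fvec xs) = sum_list (map f xs)"
  by (induction xs) (simp_all add: lin_ext_add lin_ext_delta, simp add: lin_ext_def fsupp_def)

lemma lin_ext_span:
  assumes "v \<in> module.span fscale R" and s: "module s"
    and R: "\<And>r. r \<in> R \<Longrightarrow> finite (fsupp r) \<and> lin_ext s f r \<in> module.span s T"
  shows "finite (fsupp v) \<and> lin_ext s f v \<in> module.span s T"
  using assms(1)
proof (induction v rule: module.span_induct_alt[OF module_fscale, consumes 1, case_names base step])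
  case base
  \<comment> \<open>The induction method eta-expands \<open>0\<close> in \<open>?case\<close>, which simp would then rewrite pointwise.\<close>
  have "finite (fsupp 0) \<and> lin_ext s f 0 \<in> module.span s T"
    by (simp add: lin_ext_def module.span_zero[OF s])
  then show ?case .
next
  case (step r x y)
  then have "finite (fsupp x)" "lin_ext s f x \<in> module.span s T" using R by auto
  moreover have "lin_ext s f (fscale r x + y) = s r (lin_ext s f x) + lin_ext s f y"
    using step s \<open>finite (fsupp x)\<close> by (simp add: lin_ext_add lin_ext_fscale)
  ultimately have "finite (fsupp (fscale r x + y)) \<and> lin_ext s f (fscale r x + y) \<in> module.span s T"
    using step s by (simp add: module.span_add module.span_scale)
  then show ?case .
qed

lemma tens2_eq_if_fvec_eq: "fvec xs = (fvec ys :: _ \<Rightarrow> 'k::comm_ring_1) \<Longrightarrow> tens2_eq (sM :: 'k \<Rightarrow> _) sN xs ys"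
  by (simp add: tens2_eq_def module.span_zero[OF module_fscale])

lemma tens2_eq_refl: "tens2_eq sM sN xs xs"
  by (rule tens2_eq_if_fvec_eq) (rule refl)

lemma tens2_eq_sym: "tens2_eq sM sN xs ys \<Longrightarrow> tens2_eq sM sN ys xs"
  unfolding tens2_eq_def by (metis minus_diff_eq module.span_neg[OF module_fscale])

lemma tens2_eq_trans [trans]:
  "tens2_eq sM sN xs ys \<Longrightarrow> tens2_eq sM sN ys zs \<Longrightarrow> tens2_eq sM sN xs zs"
  unfolding tens2_eq_def by (drule (1) module.span_add[OF module_fscale]) simp

lemma tens2_eq_append:
  "tens2_eq sM sN xs ys \<Longrightarrow> tens2_eq sM sN xs' ys' \<Longrightarrow> tens2_eq sM sN (xs @ xs') (ys @ ys')"
  unfolding tens2_eq_def by (drule (1) module.span_add[OF module_fscale]) (simp add: algebra_simps)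

lemma tens2_rels_in_span: "r \<in> tens2_rels sM sN \<Longrightarrow> r \<in> module.span fscale (tens2_rels sM sN)"
  by (rule module.span_base[OF module_fscale])

lemma tens2_eq_add_left: "tens2_eq sM sN [(x + x', y)] [(x, y), (x', y)]"
proof -
  have "delta (x + x', y) - delta (x, y) - delta (x', y) \<in> tens2_rels sM sN"
    unfolding tens2_rels_def by blast
  then show ?thesis
    unfolding tens2_eq_def by (simp add: tens2_rels_in_span diff_diff_eq)
qed

lemma tens2_eq_add_right: "tens2_eq sM sN [(x, y + y')] [(x, y), (x, y')]"
proof -
  have "delta (x, y + y') - delta (x, y) - delta (x, y') \<in> tens2_rels sM sN"
    unfolding tens2_rels_def by blast
  then show ?thesis
    unfolding tens2_eq_def by (simp add: tens2_rels_in_span diff_diff_eq)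
qed

lemma tens2_eq_scale_swap: "tens2_eq sM sN [(x, sN r y)] [(sM r x, y)]"
proof -
  have "delta (x, sN r y) - fscale r (delta (x, y)) \<in> tens2_rels sM sN"
    and "delta (sM r x, y) - fscale r (delta (x, y)) \<in> tens2_rels sM sN"
    unfolding tens2_rels_def by blast+
  then have "(delta (x, sN r y) - fscale r (delta (x, y))) - (delta (sM r x, y) - fscale r (delta (x, y)))
      \<in> module.span fscale (tens2_rels sM sN)"
    by (intro module.span_diff[OF module_fscale] tens2_rels_in_span)
  then show ?thesis
    unfolding tens2_eq_def by simp
qed

abbreviation map_left :: "('m \<Rightarrow> 'm') \<Rightarrow> ('m \<times> 'n) list \<Rightarrow> ('m' \<times> 'n) list" where
  "map_left g \<equiv> map (\<lambda>(x, y). (g x, y))"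

lemma fvec_map_left_scale_diff_in_span:
  "fvec (map_left (sM r) xs) - fscale r (fvec xs) \<in> module.span fscale (tens2_rels sM sN)"
proof (induction xs)
  case Nil
  have "fvec (map_left (sM r) []) - fscale r (fvec []) \<in> module.span fscale (tens2_rels sM sN)"
    by (simp add: module.span_zero[OF module_fscale] module.scale_zero_right[OF module_fscale])
  then show ?case .
next
  case (Cons p xs)
  obtain x y where p: "p = (x, y)" by fastforce
  have rel: "delta (sM r x, y) - fscale r (delta (x, y)) \<in> tens2_rels sM sN"
    unfolding tens2_rels_def by blast
  have "fvec (map_left (sM r) (p # xs)) - fscale r (fvec (p # xs))
      = (delta (sM r x, y) - fscale r (delta (x, y))) + (fvec (map_left (sM r) xs) - fscale r (fvec xs))"
    by (simp add: p module.scale_right_distrib[OF module_fscale])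
  also have "\<dots> \<in> module.span fscale (tens2_rels sM sN)"
    using Cons.IH rel
    by (blast intro: module.span_add[OF module_fscale] tens2_rels_in_span)
  finally show ?case .
qed

lemma tens2_eq_map_left_add:
  "tens2_eq sM sN (map_left (\<lambda>x. g x + g' x) xs) (map_left g xs @ map_left g' xs)"
proof (induction xs)
  case Nil
  show ?case by (simp add: tens2_eq_refl)
next
  case (Cons p xs)
  obtain x y where p: "p = (x, y)" by fastforce
  have "tens2_eq sM sN ([(g x + g' x, y)] @ map_left (\<lambda>x. g x + g' x) xs)
      ([(g x, y), (g' x, y)] @ map_left g xs @ map_left g' xs)"
    by (rule tens2_eq_append[OF tens2_eq_add_left Cons.IH])
  also have "tens2_eq sM sN \<dots> (map_left g (p # xs) @ map_left g' (p # xs))"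
    by (rule tens2_eq_if_fvec_eq) (simp add: p add_ac)
  finally show ?case
    by (simp add: p)
qed

lemma tens2_eq_sum_list_diff_in_span:
  assumes "tens2_eq sM sN xs ys" and s: "module s"
    and "\<And>x x' y. f (x + x', y) - f (x, y) - f (x', y) \<in> module.span s T"
    and "\<And>x y y'. f (x, y + y') - f (x, y) - f (x, y') \<in> module.span s T"
    and "\<And>r x y. f (sM r x, y) - s r (f (x, y)) \<in> module.span s T"
    and "\<And>r x y. f (x, sN r y) - s r (f (x, y)) \<in> module.span s T"
  shows "sum_list (map f xs) - sum_list (map f ys) \<in> module.span s T"
proof -
  have "finite (fsupp r) \<and> lin_ext s f r \<in> module.span s T" if "r \<in> tens2_rels sM sN" for r
    using that assms(3-6) by (auto simp: tens2_rels_def lin_ext_diff lin_ext_fscale lin_ext_delta s)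
  then have "lin_ext s f (fvec xs - fvec ys) \<in> module.span s T"
    using assms(1) lin_ext_span[OF _ s] unfolding tens2_eq_def by blast
  then show ?thesis
    by (simp add: lin_ext_diff lin_ext_fvec s)
qed

lemma tens2_eq_sum_list:
  assumes "tens2_eq sM sN xs ys"
    and "\<And>y. module_hom sM s (\<lambda>x. f x y)" and "\<And>x. module_hom sN s (f x)"
  shows "(\<Sum>(x, y)\<leftarrow>xs. f x y) = (\<Sum>(x, y)\<leftarrow>ys. f x y)"
proof -
  have s: "module s"
    using assms(3) module_hom.axioms(2) by blast
  have "(\<Sum>(x, y)\<leftarrow>xs. f x y) - (\<Sum>(x, y)\<leftarrow>ys. f x y) \<in> module.span s {}"
    by (rule tens2_eq_sum_list_diff_in_span[OF assms(1) s])
      (simp_all add: module_hom.add[OF assms(2)] module_hom.add[OF assms(3)]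
        module_hom.scale[OF assms(2)] module_hom.scale[OF assms(3)] module.span_zero[OF s])
  then show ?thesis
    using s by (simp add: module.span_empty)
qed

lemma tens2_eq_concat_map:
  assumes "tens2_eq sM sN xs ys"
    and "\<And>x x' y. tens2_eq sP sQ (G (x + x', y)) (G (x, y) @ G (x', y))"
    and "\<And>x y y'. tens2_eq sP sQ (G (x, y + y')) (G (x, y) @ G (x, y'))"
    and "\<And>r x y. tens2_eq sP sQ (G (sM r x, y)) (map_left (sP r) (G (x, y)))"
    and "\<And>r x y. tens2_eq sP sQ (G (x, sN r y)) (map_left (sP r) (G (x, y)))"
  shows "tens2_eq sP sQ (concat (map G xs)) (concat (map G ys))"
proof -
  have scale: "fvec zs - fscale r (fvec zs') \<in> module.span fscale (tens2_rels sP sQ)"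
    if "tens2_eq sP sQ zs (map_left (sP r) zs')" for r zs zs'
  proof -
    have "fvec zs - fscale r (fvec zs')
        = (fvec zs - fvec (map_left (sP r) zs')) + (fvec (map_left (sP r) zs') - fscale r (fvec zs'))"
      by simp
    also have "\<dots> \<in> module.span fscale (tens2_rels sP sQ)"
      using that fvec_map_left_scale_diff_in_span unfolding tens2_eq_def
      by (rule module.span_add[OF module_fscale])
    finally show ?thesis .
  qed
  have add: "fvec (G (x + x', y)) - fvec (G (x, y)) - fvec (G (x', y)) \<in> module.span fscale (tens2_rels sP sQ)"
    "fvec (G (x, y + y')) - fvec (G (x, y)) - fvec (G (x, y')) \<in> module.span fscale (tens2_rels sP sQ)"
    for x x' y y'
    using assms(2,3) by (simp_all add: tens2_eq_def diff_diff_eq)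
  have "sum_list (map (fvec \<circ> G) xs) - sum_list (map (fvec \<circ> G) ys) \<in> module.span fscale (tens2_rels sP sQ)"
    by (rule tens2_eq_sum_list_diff_in_span[OF assms(1) module_fscale])
      (simp_all add: add scale[OF assms(4)] scale[OF assms(5)])
  then show ?thesis
    by (simp add: tens2_eq_def fvec_concat)
qed

lemma tens2_eq_map_left:
  assumes g: "module_hom sM sM' g" and "tens2_eq sM sN xs ys"
  shows "tens2_eq sM' sN (map_left g xs) (map_left g ys)"
proof -
  have map_left_eq: "map_left g zs = concat (map (\<lambda>(x, y). [(g x, y)]) zs)" for zs
    by (induction zs) auto
  show ?thesis
    unfolding map_left_eq by (rule tens2_eq_concat_map[OF assms(2)];
      simp add: module_hom.add[OF g] module_hom.scale[OF g]
        tens2_eq_add_left tens2_eq_add_right tens2_eq_refl tens2_eq_scale_swap)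
qed

lemma k_algebra_scale_mult:
  assumes "k_algebra s"
  shows "s r x * y = s r (x * y)" and "x * s r y = s r (x * y)"
  using assms unfolding k_algebra_def by metis+

lemma k_algebra_module_hom_mult_left:
  assumes "k_algebra s"
  shows "module_hom s s ((*) b)"
  using assms unfolding module_hom_def module_hom_axioms_def
  by (simp add: k_algebra_def distrib_left k_algebra_scale_mult(2)[OF assms])

lemma tens2_eq_concat_map_coaction:
  fixes sH :: "'k::comm_ring_1 \<Rightarrow> 'h::ring_1 \<Rightarrow> 'h" and sA :: "'k \<Rightarrow> 'a::ring_1 \<Rightarrow> 'a"
  assumes kH: "k_algebra sH" and A: "left_comodule_algebra sH \<Delta> \<epsilon> sA \<rho>"
    and \<phi>: "module_hom sH sA \<phi>" and "tens2_eq sH sH xs ys"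
  shows "tens2_eq sH sA (concat (map (\<lambda>(d1, d2). map_left ((*) d2) (\<rho> (\<phi> d1))) xs))
           (concat (map (\<lambda>(d1, d2). map_left ((*) d2) (\<rho> (\<phi> d1))) ys))"
proof -
  have \<rho>_add: "tens2_eq sH sA (\<rho> (a + a')) (\<rho> a @ \<rho> a')" for a a'
    using A unfolding left_comodule_algebra_def by blast
  have \<rho>_scale: "tens2_eq sH sA (\<rho> (sA r a)) (map_left (sH r) (\<rho> a))" for r a
    using A unfolding left_comodule_algebra_def by blast
  have mult: "module_hom sH sH ((*) b)" for b
    using kH by (rule k_algebra_module_hom_mult_left)
  have mult_scale_comm: "map_left ((*) b) (map_left (sH r) zs) = map_left (sH r) (map_left ((*) b) zs)"
    for b r and zs :: "('h \<times> 'a) list"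
    by (induction zs) (auto simp: k_algebra_scale_mult[OF kH])
  have add_left: "tens2_eq sH sA (map_left ((*) d2) (\<rho> (\<phi> (d1 + d1'))))
      (map_left ((*) d2) (\<rho> (\<phi> d1)) @ map_left ((*) d2) (\<rho> (\<phi> d1')))" for d1 d1' d2
    using tens2_eq_map_left[OF mult \<rho>_add] by (simp add: module_hom.add[OF \<phi>])
  have add_right: "tens2_eq sH sA (map_left ((*) (d2 + d2')) (\<rho> (\<phi> d1)))
      (map_left ((*) d2) (\<rho> (\<phi> d1)) @ map_left ((*) d2') (\<rho> (\<phi> d1)))" for d1 d2 d2'
    using tens2_eq_map_left_add[of sH sA "(*) d2" "(*) d2'"] by (simp add: distrib_right)
  have scale_left: "tens2_eq sH sA (map_left ((*) d2) (\<rho> (\<phi> (sH r d1))))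
      (map_left (sH r) (map_left ((*) d2) (\<rho> (\<phi> d1))))" for r d1 d2
    using tens2_eq_map_left[OF mult \<rho>_scale, of d2 r "\<phi> d1"]
    by (simp only: module_hom.scale[OF \<phi>] mult_scale_comm)
  have scale_right: "map_left ((*) (sH r d2)) zs = map_left (sH r) (map_left ((*) d2) zs)"
    for r d2 and zs :: "('h \<times> 'a) list"
    by (induction zs) (auto simp: k_algebra_scale_mult[OF kH])
  show ?thesis
    by (rule tens2_eq_concat_map[OF assms(4)])
      (simp_all del: map_map add: add_left add_right scale_left scale_right tens2_eq_refl)
qed

lemma A_integral_left_colinear:
  fixes sH :: "'k::comm_ring_1 \<Rightarrow> 'h::ring_1 \<Rightarrow> 'h" and sA :: "'k \<Rightarrow> 'a::ring_1 \<Rightarrow> 'a"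
  assumes H: "bialgebra sH \<Delta> \<epsilon>" and A: "left_comodule_algebra sH \<Delta> \<epsilon> sA \<rho>"
    and \<gamma>: "A_integral sH \<Delta> sA \<rho> \<gamma>"
  shows "left_colinear sH \<Delta> sA \<rho> (\<lambda>h. \<gamma> h 1)"
proof -
  have kH: "k_algebra sH" and \<Delta>_one: "tens2_eq sH sH (\<Delta> 1) [(1, 1)]"
    using H unfolding bialgebra_def by blast+
  have "tens2_eq sH sA (\<rho> (\<gamma> c 1)) (map (\<lambda>(c1, c2). (c1, \<gamma> c2 1)) (\<Delta> c))" for c
  proof -
    let ?G = "\<lambda>(d1, d2). map_left ((*) d2) (\<rho> (\<gamma> c d1))"
    have \<gamma>c: "module_hom sH sA (\<gamma> c)"
      using \<gamma> unfolding A_integral_def by blast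
    have "tens2_eq sH sA (map (\<lambda>(c1, c2). (c1, \<gamma> c2 1)) (\<Delta> c)) (concat (map ?G (\<Delta> 1)))"
      using \<gamma> unfolding A_integral_def by blast
    also have "tens2_eq sH sA \<dots> (concat (map ?G [(1, 1)]))"
      by (rule tens2_eq_concat_map_coaction[OF kH A \<gamma>c \<Delta>_one])
    also have "concat (map ?G [(1, 1)]) = \<rho> (\<gamma> c 1)"
      by simp
    finally show ?thesis
      by (rule tens2_eq_sym)
  qed
  then show ?thesis
    using \<gamma> unfolding left_colinear_def A_integral_def by blast
qed

lemma total_A_integral_one_one:
  assumes H: "bialgebra sH \<Delta> \<epsilon>" and \<gamma>: "total_A_integral sH \<Delta> \<epsilon> sA \<rho> \<gamma>"
  shows "\<gamma> 1 1 = 1"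
proof -
  have \<Delta>_one: "tens2_eq sH sH (\<Delta> 1) [(1, 1)]" and "\<epsilon> 1 = 1"
    using H unfolding bialgebra_def by blast+
  have \<gamma>_left: "module_hom sH sA (\<lambda>c. \<gamma> c d)" and \<gamma>_right: "module_hom sH sA (\<gamma> c)" for c d
    using \<gamma> unfolding total_A_integral_def A_integral_def by blast+
  have "\<gamma> 1 1 = (\<Sum>(c1, c2)\<leftarrow>[(1, 1)]. \<gamma> c1 c2)"
    by simp
  also have "\<dots> = (\<Sum>(c1, c2)\<leftarrow>\<Delta> 1. \<gamma> c1 c2)"
    by (rule tens2_eq_sum_list[OF tens2_eq_sym[OF \<Delta>_one] \<gamma>_left \<gamma>_right])
  also have "\<dots> = sA (\<epsilon> 1) 1"
    using \<gamma> unfolding total_A_integral_def by blast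
  also have "\<dots> = 1"
    using \<open>\<epsilon> 1 = 1\<close> module_hom.axioms(2)[OF \<gamma>_right] by (simp add: module.scale_one)
  finally show ?thesis .
qed

theorem proposition3p1p1:
  fixes sH :: "'k::comm_ring_1 \<Rightarrow> 'h::ring_1 \<Rightarrow> 'h"
    and \<Delta> :: "'h \<Rightarrow> ('h \<times> 'h) list" and \<epsilon> :: "'h \<Rightarrow> 'k"
    and sA :: "'k \<Rightarrow> 'a::ring_1 \<Rightarrow> 'a" and \<rho> :: "'a \<Rightarrow> ('h \<times> 'a) list"
    and \<gamma> :: "'h \<Rightarrow> 'h \<Rightarrow> 'a"
  assumes "bialgebra sH \<Delta> \<epsilon>"
    and "projective_module sH"
    and "left_comodule_algebra sH \<Delta> \<epsilon> sA \<rho>"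
    and "A_integral sH \<Delta> sA \<rho> \<gamma>"
  shows "left_colinear sH \<Delta> sA \<rho> (\<lambda>h. \<gamma> h 1) \<and>
         (total_A_integral sH \<Delta> \<epsilon> sA \<rho> \<gamma> \<longrightarrow> doi_total_integral sH \<Delta> sA \<rho> (\<lambda>h. \<gamma> h 1))"
proof -
  have colinear: "left_colinear sH \<Delta> sA \<rho> (\<lambda>h. \<gamma> h 1)"
    using assms(1,3,4) by (rule A_integral_left_colinear)
  moreover have "doi_total_integral sH \<Delta> sA \<rho> (\<lambda>h. \<gamma> h 1)"
    if "total_A_integral sH \<Delta> \<epsilon> sA \<rho> \<gamma>"
    using colinear total_A_integral_one_one[OF assms(1) that] unfolding doi_total_integral_def by blast
  ultimately show ?thesis
    by blast
qed

end
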